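(* Let $X$ be a finite set, let $\emptyset \neq A \subseteq B \subseteq 2^X$, and let $X_p$ be a random subset of $X$ with distribution $\mu_p$. Let $K$ be a constant such that for every finite set $Y$ and every nontrivial upper set $\mathcal{F}\subseteq 2^Y$ one has $p_c(\mathcal{F}) \le K\, q(\mathcal{F}) \log \ell(\mathcal{F})$ (such a universal constant exists by the Park-Pham theorem). Then for $p\in(0,1)$, $$\mathbb{P}\big(X_p \in A \mid X_p \in B\big) > \tfrac{1}{2}\, r_{A,B}(p)$$ whenever $p > K\, q(\langle A \rangle)\log \ell(\langle A \rangle)$.
   Context: For $p\in[0,1]$, $\mu_p$ is the product measure on $2^X$: $\mu_p(S)=p^{|S|}(1-p)^{|X|-|S|}$ for $S\subseteq X$, extended to families by $\mu_p(\mathcal{F})=\sum_{S\in\mathcal{F}}\mu_p(S)$. A property $\mathcal{F}\subseteq 2^X$ is an upper set if $S\in\mathcal{F}$, $S\subseteq T$ imply $T\in\mathcal{F}$, and nontrivial if $\mathcal{F}\ne\emptyset,2^X$. The critical probability $p_c(\mathcal{F})$ of a nontrivial upper set is the unique $p$ with $\mu_p(\mathcal{F})=\frac12$. For $\mathcal{A}\subseteq 2^X$, $\langle \mathcal{A}\rangle=\{T\subseteq X: S\subseteq T\text{ for some }S\in\mathcal{A}\}$. A family $\mathcal{G}$ covers an upper set $\mathcal{F}$ if $\mathcal{F}\subseteq\bigcup_{S\in\mathcal{G}}\langle\{S\}\rangle$; $\mathcal{F}$ is $p$-small if some cover $\mathcal{G}$ has $\sum_{S\in\mathcal{G}}p^{|S|}\le\frac12$;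 $q(\mathcal{F})$ is the largest $p$ for which $\mathcal{F}$ is $p$-small. With $\mathcal{F}_0$ the set of inclusion-minimal elements of $\mathcal{F}$, $\ell_0(\mathcal{F})=\max\{|S|:S\in\mathcal{F}_0\}$ and $\ell(\mathcal{F})=\max\{\ell_0(\mathcal{F}),2\}$. For $\emptyset\ne A\subseteq B\subseteq 2^X$, $r_{A,B}(p)=\dfrac{\mathbb{P}(X_p\in A\mid X_p\in\langle A\rangle)}{\mathbb{P}(X_p\in B)}$. *)

theory Defs
  imports Complex_Main
begin

definition mu :: "'a set \<Rightarrow> real \<Rightarrow> 'a set set \<Rightarrow> real" where
  "mu X p F = (\<Sum>S\<in>F. p ^ card S * (1 - p) ^ (card X - card S))"

definition upper_set :: "'a set \<Rightarrow> 'a set set \<Rightarrow> bool" where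
  "upper_set X F \<longleftrightarrow> F \<subseteq> Pow X \<and> (\<forall>S\<in>F. \<forall>T. S \<subseteq> T \<and> T \<subseteq> X \<longrightarrow> T \<in> F)"

definition nontrivial :: "'a set \<Rightarrow> 'a set set \<Rightarrow> bool" where
  "nontrivial X F \<longleftrightarrow> F \<noteq> {} \<and> F \<noteq> Pow X"

definition p_c :: "'a set \<Rightarrow> 'a set set \<Rightarrow> real" where
  "p_c X F = (THE p. 0 \<le> p \<and> p \<le> 1 \<and> mu X p F = 1/2)"

definition up :: "'a set \<Rightarrow> 'a set set \<Rightarrow> 'a set set" where
  "up X A = {T. T \<subseteq> X \<and> (\<exists>S\<in>A. S \<subseteq> T)}"

definition covers :: "'a set \<Rightarrow> 'a set set \<Rightarrow> 'a set set \<Rightarrow> bool" where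
  "covers X G F \<longleftrightarrow> F \<subseteq> (\<Union>S\<in>G. up X {S})"

definition p_small :: "'a set \<Rightarrow> 'a set set \<Rightarrow> real \<Rightarrow> bool" where
  "p_small X F p \<longleftrightarrow> (\<exists>G. G \<subseteq> Pow X \<and> covers X G F \<and> (\<Sum>S\<in>G. p ^ card S) \<le> 1/2)"

definition q :: "'a set \<Rightarrow> 'a set set \<Rightarrow> real" where
  "q X F = (GREATEST p. 0 \<le> p \<and> p \<le> 1 \<and> p_small X F p)"

definition minimal_elems :: "'a set set \<Rightarrow> 'a set set" where
  "minimal_elems F = {S\<in>F. \<forall>T\<in>F. T \<subseteq> S \<longrightarrow> T = S}"

definition ell0 :: "'a set set \<Rightarrow> nat" where
  "ell0 F = Max (card ` minimal_elems F)"

definition ell :: "'a set set \<Rightarrow> nat" where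
  "ell F = max (ell0 F) 2"

definition cond_prob :: "'a set \<Rightarrow> real \<Rightarrow> 'a set set \<Rightarrow> 'a set set \<Rightarrow> real" where
  "cond_prob X p A B = mu X p (A \<inter> B) / mu X p B"

definition r_AB :: "'a set \<Rightarrow> 'a set set \<Rightarrow> 'a set set \<Rightarrow> real \<Rightarrow> real" where
  "r_AB X A B p = cond_prob X p A (up X A) / mu X p B"

end

theory Submission imports Defs begin

(* The hypothesis on K puts p above the critical probability of the upper set <A>, so
   mu_p(<A>) > 1/2, because p \<mapsto> mu_p(F) is strictly increasing on every nontrivial upper
   set F.  Since A \<subseteq> <A>, the ratio r_{A,B}(p) is P(A | B) / mu_p(<A>) < 2 P(A | B).
   Strict monotonicity, which also makes p_c well defined, is proved by induction on X:
   conditioning on one element x writes mu_p(F) as a convex combination, with weight p, of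
   the measures of the two sections of F at x, and the section avoiding x lies inside the
   section containing x. *)

definition sect_without :: "'a \<Rightarrow> 'a set set \<Rightarrow> 'a set set" where
  "sect_without x F = {S \<in> F. x \<notin> S}"

definition sect_with :: "'a set \<Rightarrow> 'a \<Rightarrow> 'a set set \<Rightarrow> 'a set set" where
  "sect_with X x F = {T. T \<subseteq> X \<and> insert x T \<in> F}"

lemma family_split_sections:
  assumes "x \<notin> X" "F \<subseteq> Pow (insert x X)"
  shows "F = sect_without x F \<union> insert x ` sect_with X x F"
proof (intro equalityI subsetI)
  fix S assume S: "S \<in> F"
  show "S \<in> sect_without x F \<union> insert x ` sect_with X x F"
  proof (cases "x \<in> S")
    case True
    then have "S = insert x (S - {x})" "S - {x} \<subseteq> X" using S assms(2) by auto
    then show ?thesis using S unfolding sect_with_def by (metis (mono_tags) UnI2 image_eqI mem_Collect_eq)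
  qed (use S in \<open>auto simp: sect_without_def\<close>)
qed (auto simp: sect_without_def sect_with_def)

lemma mu_insert:
  assumes "finite X" "x \<notin> X" "F \<subseteq> Pow (insert x X)"
  shows "mu (insert x X) p F = (1 - p) * mu X p (sect_without x F) + p * mu X p (sect_with X x F)"
proof -
  let ?F0 = "sect_without x F" and ?F1 = "sect_with X x F"
  let ?w = "\<lambda>S. p ^ card S * (1 - p) ^ (card (insert x X) - card S)"
  have fin: "finite F" using assms by (meson finite_Pow_iff finite_insert finite_subset)
  have fin1: "finite ?F1"
    by (rule finite_subset[of _ "Pow X"]) (use assms(1) in \<open>auto simp: sect_with_def\<close>)
  have inj: "inj_on (insert x) ?F1"
    using assms(2) by (intro inj_onI) (auto simp: sect_with_def insert_ident)
  have cX: "card (insert x X) = Suc (card X)" using assms by simp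
  have avoiding: "sum ?w ?F0 = (1 - p) * mu X p ?F0"
    unfolding mu_def sum_distrib_left
  proof (rule sum.cong[OF refl])
    fix S assume "S \<in> ?F0"
    then have "card S \<le> card X" using assms by (auto simp: sect_without_def intro: card_mono)
    then show "?w S = (1 - p) * (p ^ card S * (1 - p) ^ (card X - card S))"
      using cX by (simp add: Suc_diff_le)
  qed
  have containing: "sum ?w (insert x ` ?F1) = p * mu X p ?F1"
    unfolding mu_def sum_distrib_left sum.reindex[OF inj] o_def
  proof (rule sum.cong[OF refl])
    fix T assume "T \<in> ?F1"
    then have "finite T" "x \<notin> T"
      using assms(2) finite_subset[OF _ assms(1)] by (auto simp: sect_with_def)
    then have "card (insert x T) = Suc (card T)" by simp
    then show "?w (insert x T) = p * (p ^ card T * (1 - p) ^ (card X - card T))"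
      using cX by simp
  qed
  have "mu (insert x X) p F = sum ?w ?F0 + sum ?w (insert x ` ?F1)"
    unfolding mu_def
  proof (subst family_split_sections[OF assms(2,3)], rule sum.union_disjoint)
    show "finite ?F0" using fin by (simp add: sect_without_def)
    show "finite (insert x ` ?F1)" using fin1 by simp
  qed (auto simp: sect_without_def)
  then show ?thesis using avoiding containing by simp
qed

lemma upper_setD:
  assumes "upper_set X F" "S \<in> F" "S \<subseteq> T" "T \<subseteq> X"
  shows "T \<in> F"
  using assms unfolding upper_set_def by blast

lemma upper_set_subset_Pow: "upper_set X F \<Longrightarrow> F \<subseteq> Pow X"
  unfolding upper_set_def by blast

lemma upper_set_sect_without:
  assumes "upper_set (insert x X) F" "x \<notin> X"
  shows "upper_set X (sect_without x F)"
proof (unfold upper_set_def, intro conjI ballI allI impI)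
  show "sect_without x F \<subseteq> Pow X"
    using upper_set_subset_Pow[OF assms(1)] by (auto simp: sect_without_def)
  fix S T assume "S \<in> sect_without x F" "S \<subseteq> T \<and> T \<subseteq> X"
  then show "T \<in> sect_without x F"
    using upper_setD[OF assms(1), of S T] assms(2) by (auto simp: sect_without_def)
qed

lemma upper_set_sect_with:
  assumes "upper_set (insert x X) F"
  shows "upper_set X (sect_with X x F)"
proof (unfold upper_set_def, intro conjI ballI allI impI)
  show "sect_with X x F \<subseteq> Pow X" by (auto simp: sect_with_def)
  fix S T assume "S \<in> sect_with X x F" "S \<subseteq> T \<and> T \<subseteq> X"
  then show "T \<in> sect_with X x F"
    using upper_setD[OF assms, of "insert x S" "insert x T"] by (auto simp: sect_with_def)
qed

lemma sect_without_subset_sect_with: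
  assumes "upper_set (insert x X) F"
  shows "sect_without x F \<subseteq> sect_with X x F"
proof
  fix S assume S: "S \<in> sect_without x F"
  then have "S \<subseteq> X" using upper_set_subset_Pow[OF assms] by (auto simp: sect_without_def)
  moreover have "insert x S \<in> F"
    by (rule upper_setD[OF assms, of S]) (use S \<open>S \<subseteq> X\<close> in \<open>auto simp: sect_without_def\<close>)
  ultimately show "S \<in> sect_with X x F" by (simp add: sect_with_def)
qed

lemma nontrivial_upper_set_iff:
  assumes "upper_set X F"
  shows "nontrivial X F \<longleftrightarrow> X \<in> F \<and> {} \<notin> F"
proof
  assume nt: "nontrivial X F"
  then obtain S where "S \<in> F" unfolding nontrivial_def by blast
  then have "X \<in> F"
    by (rule upper_setD[OF assms, of S]) (use \<open>S \<in> F\<close> upper_set_subset_Pow[OF assms] in auto)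
  moreover have "{} \<notin> F"
  proof
    assume "{} \<in> F"
    then have "Pow X \<subseteq> F" using upper_setD[OF assms, of "{}"] by blast
    then show False using nt upper_set_subset_Pow[OF assms] unfolding nontrivial_def by blast
  qed
  ultimately show "X \<in> F \<and> {} \<notin> F" ..
next
  assume "X \<in> F \<and> {} \<notin> F"
  then show "nontrivial X F" unfolding nontrivial_def by auto
qed

lemma mu_mono:
  assumes "finite X" "F \<subseteq> G" "G \<subseteq> Pow X" "0 \<le> p" "p \<le> 1"
  shows "mu X p F \<le> mu X p G"
  unfolding mu_def by (rule sum_mono2) (use assms in \<open>auto intro: finite_subset\<close>)

lemma mu_pos:
  assumes "finite X" "F \<subseteq> Pow X" "F \<noteq> {}" "0 < p" "p < 1"
  shows "0 < mu X p F"
  unfolding mu_def by (rule sum_pos) (use assms in \<open>auto intro: finite_subset\<close>)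

lemma mu_pos_if_top:
  assumes "finite X" "X \<in> F" "F \<subseteq> Pow X" "0 < p" "p \<le> 1"
  shows "0 < mu X p F"
proof -
  have "0 < mu X p {X}" using assms by (simp add: mu_def)
  also have "\<dots> \<le> mu X p F" using assms by (intro mu_mono) auto
  finally show ?thesis .
qed

lemma mu_Pow: "finite X \<Longrightarrow> mu X p (Pow X) = 1"
proof (induction X rule: finite_induct)
  case empty
  then show ?case by (simp add: mu_def)
next
  case (insert x X)
  have "sect_without x (Pow (insert x X)) = Pow X" "sect_with X x (Pow (insert x X)) = Pow X"
    using insert.hyps by (auto simp: sect_without_def sect_with_def)
  then show ?case using insert by (simp add: mu_insert algebra_simps)
qed

lemma convex_comb_mono:
  fixes a b t t' :: real
  assumes "a \<le> b" "t \<le> t'"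
  shows "(1 - t) * a + t * b \<le> (1 - t') * a + t' * b"
proof -
  have "(1 - t') * a + t' * b - ((1 - t) * a + t * b) = (t' - t) * (b - a)"
    by (simp add: algebra_simps)
  with assms show ?thesis by (smt (verit) mult_nonneg_nonneg)
qed

lemma mu_sect_without_le_sect_with:
  assumes "finite X" "x \<notin> X" "upper_set (insert x X) F" "0 \<le> p" "p \<le> 1"
  shows "mu X p (sect_without x F) \<le> mu X p (sect_with X x F)"
  using assms sect_without_subset_sect_with[OF assms(3)]
    upper_set_subset_Pow[OF upper_set_sect_with[OF assms(3)]]
  by (intro mu_mono) auto

lemma mu_upper_set_mono:
  assumes "finite X" "upper_set X F" "0 \<le> p" "p \<le> p'" "p' \<le> 1"
  shows "mu X p F \<le> mu X p' F"
  using assms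
proof (induction X arbitrary: F rule: finite_induct)
  case empty
  then have "F \<subseteq> {{}}" using upper_set_subset_Pow by fastforce
  then have "F = {} \<or> F = {{}}" by blast
  then show ?case by (auto simp: mu_def)
next
  case (insert x X)
  let ?a = "\<lambda>t. mu X t (sect_without x F)" and ?b = "\<lambda>t. mu X t (sect_with X x F)"
  have FP: "F \<subseteq> Pow (insert x X)" using insert.prems(1) by (rule upper_set_subset_Pow)
  have "?a p \<le> ?a p'" "?b p \<le> ?b p'"
    using insert.IH insert.prems upper_set_sect_without[OF insert.prems(1) insert.hyps(2)]
      upper_set_sect_with[OF insert.prems(1)] by blast+
  moreover have "?a p' \<le> ?b p'"
    using insert by (intro mu_sect_without_le_sect_with) auto
  ultimately have "(1 - p) * ?a p + p * ?b p \<le> (1 - p) * ?a p' + p * ?b p'"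
    using insert.prems by (intro add_mono mult_left_mono) auto
  also have "\<dots> \<le> (1 - p') * ?a p' + p' * ?b p'"
    using \<open>?a p' \<le> ?b p'\<close> insert.prems(3) by (rule convex_comb_mono)
  finally show ?case using mu_insert[OF insert.hyps FP] by simp
qed

lemma mu_upper_set_strict_mono:
  assumes "finite X" "upper_set X F" "nontrivial X F" "0 \<le> p" "p < p'" "p' \<le> 1"
  shows "mu X p F < mu X p' F"
  using assms
proof (induction X arbitrary: F rule: finite_induct)
  case empty
  then show ?case using upper_set_subset_Pow by (force simp: nontrivial_upper_set_iff)
next
  case (insert x X)
  let ?F0 = "sect_without x F" and ?F1 = "sect_with X x F"
  let ?a = "\<lambda>t. mu X t ?F0" and ?b = "\<lambda>t. mu X t ?F1"
  have FP: "F \<subseteq> Pow (insert x X)" using insert.prems(1) by (rule upper_set_subset_Pow)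
  have up0: "upper_set X ?F0" using insert by (intro upper_set_sect_without) auto
  have up1: "upper_set X ?F1" using insert by (intro upper_set_sect_with) auto
  have a_le_b: "?a p' \<le> ?b p'" using insert by (intro mu_sect_without_le_sect_with) auto
  have b_mono: "?b p \<le> ?b p'" using insert up1 by (intro mu_upper_set_mono) auto
  have "(1 - p) * ?a p + p * ?b p < (1 - p') * ?a p' + p' * ?b p'"
  proof (cases "X \<in> ?F0")
    case True
    then have "nontrivial X ?F0"
      using insert.prems(1,2) up0 by (simp add: nontrivial_upper_set_iff sect_without_def)
    then have "?a p < ?a p'" using insert.IH up0 insert.prems by blast
    then have "(1 - p) * ?a p + p * ?b p < (1 - p) * ?a p' + p * ?b p'"
      using b_mono insert.prems by (intro add_less_le_mono mult_strict_left_mono mult_left_mono) auto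
    also have "\<dots> \<le> (1 - p') * ?a p' + p' * ?b p'"
      using a_le_b insert.prems by (intro convex_comb_mono) auto
    finally show ?thesis .
  next
    case False
    then have "?F0 = {}" using upper_setD[OF up0, of _ X] upper_set_subset_Pow[OF up0] by blast
    then have a_zero: "?a t = 0" for t by (simp add: mu_def)
    have "X \<in> ?F1"
      using insert.prems(1,2) by (simp add: nontrivial_upper_set_iff sect_with_def)
    then have "0 < ?b p'"
      by (rule mu_pos_if_top[rotated]) (use insert.hyps insert.prems upper_set_subset_Pow[OF up1] in auto)
    then have "p * ?b p < p' * ?b p'"
      using b_mono insert.prems by (smt (verit) mult_left_mono mult_strict_right_mono)
    then show ?thesis by (simp add: a_zero)
  qed
  then show ?case using mu_insert[OF insert.hyps FP] by simp
qed

lemma mu_zero_if_empty_notin: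
  assumes "finite X" "F \<subseteq> Pow X" "{} \<notin> F"
  shows "mu X 0 F = 0"
  unfolding mu_def
proof (intro sum.neutral ballI)
  fix S assume "S \<in> F"
  then have "S \<noteq> {}" "finite S" using assms by (auto intro: finite_subset[of S X])
  then have "card S \<noteq> 0" by simp
  then show "0 ^ card S * (1 - 0) ^ (card X - card S) = (0::real)" by simp
qed

lemma p_c_characterisation:
  assumes "finite X" "upper_set X F" "nontrivial X F"
  shows "0 \<le> p_c X F" "p_c X F \<le> 1" "mu X (p_c X F) F = 1/2"
proof -
  have FP: "F \<subseteq> Pow X" using assms(2) by (rule upper_set_subset_Pow)
  have "X \<in> F" "{} \<notin> F" using assms nontrivial_upper_set_iff by blast+
  then have "mu X 0 F = 0" "1 \<le> mu X 1 F"
    using mu_zero_if_empty_notin[OF assms(1) FP] mu_mono[of X "{X}" F 1] assms(1) FP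
    by (auto simp: mu_def)
  moreover have "continuous_on {0..1} (\<lambda>t. mu X t F)"
    unfolding mu_def by (intro continuous_intros)
  ultimately obtain c where c: "0 \<le> c" "c \<le> 1" "mu X c F = 1/2"
    using IVT'[of "\<lambda>t. mu X t F" 0 "1/2" 1] by auto
  have "p_c X F = c"
    unfolding p_c_def
  proof (rule the_equality)
    fix d assume d: "0 \<le> d \<and> d \<le> 1 \<and> mu X d F = 1/2"
    show "d = c"
      using mu_upper_set_strict_mono[OF assms, of c d] mu_upper_set_strict_mono[OF assms, of d c] c d
      by (cases d c rule: linorder_cases) auto
  qed (use c in auto)
  with c show "0 \<le> p_c X F" "p_c X F \<le> 1" "mu X (p_c X F) F = 1/2" by auto
qed

lemma mu_gt_half_above_p_c:
  assumes "finite X" "upper_set X F" "nontrivial X F" "p_c X F < p" "p \<le> 1"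
  shows "mu X p F > 1/2"
  using mu_upper_set_strict_mono[OF assms(1-3)] p_c_characterisation[OF assms(1-3)] assms(4,5)
  by fastforce

lemma upper_set_up: "upper_set X (up X A)"
  unfolding upper_set_def up_def by auto

lemma subset_up: "A \<subseteq> Pow X \<Longrightarrow> A \<subseteq> up X A"
  unfolding up_def by auto

lemma r_AB_eq:
  assumes "A \<subseteq> B" "B \<subseteq> Pow X"
  shows "r_AB X A B p = cond_prob X p A B / mu X p (up X A)"
proof -
  have "A \<inter> up X A = A" "A \<inter> B = A" using assms subset_up[of A X] by auto
  then show ?thesis unfolding r_AB_def cond_prob_def by simp
qed

lemma cond_prob_pos:
  assumes "finite X" "A \<noteq> {}" "A \<subseteq> B" "B \<subseteq> Pow X" "0 < p" "p < 1"
  shows "cond_prob X p A B > 0"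
proof -
  have "0 < mu X p A" "0 < mu X p B" using assms by (auto intro!: mu_pos)
  then show ?thesis unfolding cond_prob_def using assms(3) by (simp add: Int_absorb2)
qed

theorem lemma3p5:
  fixes X :: "'a set" and A B :: "'a set set" and K p :: real
  assumes "finite X"
    and "A \<noteq> {}" and "A \<subseteq> B" and "B \<subseteq> Pow X"
    and K: "\<forall>Y :: 'a set. \<forall>F. finite Y \<and> upper_set Y F \<and> nontrivial Y F \<longrightarrow>
              p_c Y F \<le> K * q Y F * ln (real (ell F))"
    and "0 < p" and "p < 1"
    and "p > K * q X (up X A) * ln (real (ell (up X A)))"
  shows "cond_prob X p A B > 1/2 * r_AB X A B p"
proof -
  let ?U = "up X A"
  have "mu X p ?U > 1/2"
  proof (cases "?U = Pow X")
    case True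
    then show ?thesis using mu_Pow[OF assms(1)] by simp
  next
    case False
    then have "nontrivial X ?U"
      using assms(2-4) subset_up[of A X] unfolding nontrivial_def by blast
    moreover have "p_c X ?U < p" using K assms(1,8) upper_set_up calculation by fastforce
    ultimately show ?thesis using mu_gt_half_above_p_c[OF assms(1) upper_set_up] assms(7) by simp
  qed
  moreover have "cond_prob X p A B > 0" using assms by (intro cond_prob_pos)
  ultimately show ?thesis
    using r_AB_eq[OF assms(3,4)] by (simp add: field_simps)
qed

end
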